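(* Let $\Sigma=\mathbb{S}^{n-1}\times\mathbb{R}\subset\mathbb{R}^{n+1}$ be a self-shrinker, with $x_n$ the coordinate on the $\mathbb{R}$ factor. Then $C=\sqrt2$ is the unique value $C>0$ such that the two hypersurfaces $\{x_n=\pm C\}$ split $\Sigma$ into three stable regions $\{x_n>C\}$, $\{|x_n|<C\}$, $\{x_n<-C\}$.
   Context: $\mathbb{S}^{n-1}$ is the round sphere of radius $\sqrt{2(n-1)}$ centered at the origin of $\mathbb{R}^n$. Stability operator: $Lf=\Delta f-\tfrac12\langle\vec x,\nabla f\rangle+(|A|^2+\tfrac12)f$. A region $\Omega$ is stable if there exists a function $u$ with $Lu=0$ and $u>0$ on $\Omega$. *)

theory Defs
  imports "HOL-Analysis.Analysis"
begin

text \<open>Ambient space R^(n+1) = R^n x R, where n = CARD('n); the last (R) coordinate is x_n.\<close>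

definition shrink_radius :: "nat \<Rightarrow> real" where
  "shrink_radius n = sqrt (2 * (real n - 1))"

definition Sigma_cyl :: "((real^'n) \<times> real) set" where
  "Sigma_cyl = {(y, t). norm y = shrink_radius CARD('n)}"

text \<open>Nearest-point projection onto the cylinder (defined off the axis y = 0).\<close>
definition cyl_proj :: "(real^'n) \<times> real \<Rightarrow> (real^'n) \<times> real" where
  "cyl_proj p = ((shrink_radius CARD('n) / norm (fst p)) *\<^sub>R fst p, snd p)"

definition cyl_sdist :: "(real^'n) \<times> real \<Rightarrow> real" where
  "cyl_sdist p = norm (fst p) - shrink_radius CARD('n)"

definition pd :: "'a::real_normed_vector \<Rightarrow> ('a \<Rightarrow> real) \<Rightarrow> 'a \<Rightarrow> real" where
  "pd b F p = deriv (\<lambda>s. F (p + s *\<^sub>R b)) 0"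

definition eucl_grad :: "('a::euclidean_space \<Rightarrow> real) \<Rightarrow> 'a \<Rightarrow> 'a" where
  "eucl_grad F p = (\<Sum>b\<in>Basis. pd b F p *\<^sub>R b)"

definition eucl_lap :: "('a::euclidean_space \<Rightarrow> real) \<Rightarrow> 'a \<Rightarrow> real" where
  "eucl_lap F p = (\<Sum>b\<in>Basis. pd b (pd b F) p)"

definition C2_on :: "'a::euclidean_space set \<Rightarrow> ('a \<Rightarrow> real) \<Rightarrow> bool" where
  "C2_on U F \<longleftrightarrow> open U \<and>
     (\<exists>g H. (\<forall>x\<in>U. (F has_derivative (\<lambda>h. g x \<bullet> h)) (at x)) \<and>
            (\<forall>x\<in>U. (g has_derivative H x) (at x)) \<and>
            (\<forall>h. continuous_on U (\<lambda>x. H x h)))"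

text \<open>Normal extension of a function on the cylinder: constant along normal lines.
  Laplace-Beltrami operator and surface gradient of u on Sigma are the Euclidean ones of
  this extension, evaluated on Sigma.\<close>
definition cyl_ext :: "((real^'n) \<times> real \<Rightarrow> real) \<Rightarrow> (real^'n) \<times> real \<Rightarrow> real" where
  "cyl_ext u = u \<circ> cyl_proj"

definition cyl_lap :: "((real^'n) \<times> real \<Rightarrow> real) \<Rightarrow> (real^'n) \<times> real \<Rightarrow> real" where
  "cyl_lap u p = eucl_lap (cyl_ext u) p"

definition cyl_grad :: "((real^'n) \<times> real \<Rightarrow> real) \<Rightarrow> (real^'n) \<times> real \<Rightarrow> (real^'n) \<times> real" where
  "cyl_grad u p = eucl_grad (cyl_ext u) p"

text \<open>|A|^2 = squared Frobenius norm of the Hessian of the signed distance, on Sigma.\<close>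
definition cyl_A2 :: "(real^'n) \<times> real \<Rightarrow> real" where
  "cyl_A2 p = (\<Sum>b\<in>Basis. \<Sum>c\<in>Basis. (pd c (pd b cyl_sdist) p)\<^sup>2)"

definition stab_op :: "((real^'n) \<times> real \<Rightarrow> real) \<Rightarrow> (real^'n) \<times> real \<Rightarrow> real" where
  "stab_op u p = cyl_lap u p - (1/2) * (p \<bullet> cyl_grad u p) + (cyl_A2 p + 1/2) * u p"

definition stable_region :: "((real^'n) \<times> real) set \<Rightarrow> bool" where
  "stable_region \<Omega> \<longleftrightarrow>
     (\<exists>u. C2_on {q. fst q \<noteq> 0 \<and> cyl_proj q \<in> \<Omega>} (cyl_ext u) \<and>
          (\<forall>p\<in>\<Omega>. stab_op u p = 0 \<and> u p > 0))"

end

(*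
  On the cylinder |A|^2 = 1/2, so L acts on functions of the height t = x_n as the Hermite
  operator f'' - t f' / 2 + f, which annihilates t^2 - 2.  Hence for C = sqrt 2 the functions
  t^2 - 2 and 2 - t^2 are positive solutions of L u = 0 on the three regions.

  Conversely, let u > 0 solve L u = 0 on a region containing a closed band, and let f be a
  height function that is positive somewhere in the band, nonpositive at its ends, and a strict
  subsolution (L f > 0) where positive.  At a maximum of f / u the function f - m u has an
  interior maximum 0, which forces L f \<le> m L u = 0: a contradiction.  For C > sqrt 2 the
  function a^2 - t^2 with sqrt 2 < a < C is such an f on the band |t| \<le> a of the middle
  region; for C < sqrt 2 a quartic perturbation of t^2 - 2 is one on a band above C.
*)
theory Submission
  imports Defs
begin

lemma sum_Basis_prod_real:
  fixes f :: "'a::euclidean_space \<times> 'b::euclidean_space \<Rightarrow> real"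
  shows "sum f Basis = (\<Sum>i\<in>Basis. f (i, 0)) + (\<Sum>i\<in>Basis. f (0, i))"
proof -
  have "inj_on (\<lambda>u. (u::'a, 0::'b)) Basis" "inj_on (\<lambda>u. (0::'a, u::'b)) Basis"
    by (auto intro!: inj_onI)
  moreover have "(\<lambda>u. (u::'a, 0::'b)) ` Basis \<inter> (\<lambda>u. (0::'a, u::'b)) ` Basis = {}"
    by auto
  ultimately show ?thesis
    unfolding Basis_prod_def by (subst sum.union_disjoint) (auto simp: sum.reindex)
qed

lemma sum_Basis_inner_square:
  fixes f :: "'a::euclidean_space \<Rightarrow> 'b::euclidean_space"
  shows "(\<Sum>b\<in>Basis. \<Sum>c\<in>Basis. (f c \<bullet> b)\<^sup>2) = (\<Sum>c\<in>Basis. f c \<bullet> f c)"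
  by (subst sum.swap) (simp add: euclidean_inner[of "f _" "f _"] power2_eq_square)

lemma has_real_derivative_along_line:
  fixes F :: "'a::real_normed_vector \<Rightarrow> real"
  assumes "(F has_derivative F') (at (p + s *\<^sub>R b))"
  shows "((\<lambda>s. F (p + s *\<^sub>R b)) has_real_derivative F' b) (at s)"
proof -
  have "((\<lambda>s. p + s *\<^sub>R b) has_derivative (\<lambda>s. s *\<^sub>R b)) (at s)"
    by (auto intro!: derivative_eq_intros)
  from has_derivative_compose[OF this assms]
  have "((\<lambda>s. F (p + s *\<^sub>R b)) has_derivative (\<lambda>t. F' (t *\<^sub>R b))) (at s)"
    by (simp add: o_def)
  then show ?thesis
    by (rule has_derivative_imp_has_field_derivative)
       (simp add: linear_scale[OF has_derivative_linear[OF assms]])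
qed

lemma pd_eq_derivative:
  fixes F :: "'a::real_normed_vector \<Rightarrow> real"
  assumes "(F has_derivative F') (at p)"
  shows "pd b F p = F' b"
  unfolding pd_def using assms
  by (intro DERIV_imp_deriv has_real_derivative_along_line) simp

lemma pd_pd_eq_second_derivative:
  fixes F :: "'a::euclidean_space \<Rightarrow> real"
  assumes "open S" "p \<in> S" and F: "\<And>x. x \<in> S \<Longrightarrow> (F has_derivative (\<lambda>h. g x \<bullet> h)) (at x)"
    and g: "(g has_derivative g') (at p)"
  shows "pd c (pd b F) p = g' c \<bullet> b"
proof -
  have "((\<lambda>x. g x \<bullet> b) has_derivative (\<lambda>h. g' h \<bullet> b)) (at p)"
    using g by (auto intro!: derivative_eq_intros)
  then have "(pd b F has_derivative (\<lambda>h. g' h \<bullet> b)) (at p)"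
    by (rule has_derivative_transform_within_open[OF _ assms(1,2)])
       (simp add: pd_eq_derivative[OF F])
  then show ?thesis
    by (rule pd_eq_derivative)
qed

lemma eucl_grad_eq:
  assumes "(F has_derivative (\<lambda>h. g \<bullet> h)) (at p)"
  shows "eucl_grad F p = g"
  unfolding eucl_grad_def pd_eq_derivative[OF assms] by (rule euclidean_representation)

lemma eucl_lap_eq_trace:
  assumes "open S" "p \<in> S" "\<And>x. x \<in> S \<Longrightarrow> (F has_derivative (\<lambda>h. g x \<bullet> h)) (at x)"
    and "(g has_derivative g') (at p)"
  shows "eucl_lap F p = (\<Sum>b\<in>Basis. g' b \<bullet> b)"
  using pd_pd_eq_second_derivative[OF assms] by (simp add: eucl_lap_def)

lemma stab_op_eq:
  assumes "open S" "p \<in> S" "\<And>x. x \<in> S \<Longrightarrow> (cyl_ext u has_derivative (\<lambda>h. g x \<bullet> h)) (at x)"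
    and "(g has_derivative g') (at p)"
  shows "stab_op u p = (\<Sum>b\<in>Basis. g' b \<bullet> b) - 1/2 * (p \<bullet> g p) + (cyl_A2 p + 1/2) * u p"
  using eucl_lap_eq_trace[OF assms] eucl_grad_eq[OF assms(3)[OF assms(2)]]
  by (simp add: stab_op_def cyl_lap_def cyl_grad_def)

lemma C2_on_subset: "C2_on S F \<Longrightarrow> open N \<Longrightarrow> N \<subseteq> S \<Longrightarrow> C2_on N F"
  unfolding C2_on_def by (blast intro: continuous_on_subset)

lemma local_max_imp_second_derivative_nonpos:
  fixes F F' :: "real \<Rightarrow> real"
  assumes "0 < \<delta>" and F: "\<And>s. \<bar>s\<bar> < \<delta> \<Longrightarrow> (F has_real_derivative F' s) (at s)"
    and F': "(F' has_real_derivative d) (at 0)"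
    and max: "\<And>s. \<bar>s\<bar> < \<delta> \<Longrightarrow> F s \<le> F 0"
  shows "d \<le> 0"
proof (rule ccontr)
  assume "\<not> d \<le> 0"
  have F'0: "F' 0 = 0"
    by (rule DERIV_local_max[OF F[of 0] \<open>0 < \<delta>\<close>]) (use \<open>0 < \<delta>\<close> max in auto)
  from DERIV_pos_inc_right[OF F'] \<open>\<not> d \<le> 0\<close> obtain e
    where "0 < e" and e: "\<And>h. 0 < h \<Longrightarrow> h < e \<Longrightarrow> F' 0 < F' h"
    by auto
  define h where "h = min e \<delta> / 2"
  have h: "0 < h" "h < e" "h < \<delta>"
    using \<open>0 < e\<close> \<open>0 < \<delta>\<close> by (auto simp: h_def)
  obtain z where z: "0 < z" "z < h" "F h - F 0 = h * F' z"
    using MVT2[of 0 h F F'] h F by force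
  have "0 < F' z"
    using e[of z] z h F'0 by simp
  then have "0 < h * F' z"
    using h by simp
  then have "F 0 < F h"
    using z by linarith
  then show False
    using max[of h] h by simp
qed

lemma local_max_imp_gradient_zero_trace_nonpos:
  fixes W :: "'a::euclidean_space \<Rightarrow> real"
  assumes "open N" "p \<in> N"
    and W: "\<And>x. x \<in> N \<Longrightarrow> (W has_derivative (\<lambda>h. g x \<bullet> h)) (at x)"
    and g: "(g has_derivative g') (at p)"
    and max: "\<And>x. x \<in> N \<Longrightarrow> W x \<le> W p"
  shows "g p = 0" "(\<Sum>b\<in>Basis. g' b \<bullet> b) \<le> 0"
proof -
  obtain e where "0 < e" and e: "ball p e \<subseteq> N"
    using assms(1,2) open_contains_ball by blast
  have "(\<lambda>h. g p \<bullet> h) = (\<lambda>h. 0)"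
    using W[OF \<open>p \<in> N\<close>] by (rule has_derivative_local_max)
      (use eventually_at_in_open'[OF assms(1,2)] max in \<open>rule eventually_mono\<close>)
  then show "g p = 0"
    by (metis inner_eq_zero_iff)
  have "g' b \<bullet> b \<le> 0" if "b \<in> Basis" for b
  proof (rule local_max_imp_second_derivative_nonpos[OF \<open>0 < e\<close>])
    have line: "p + s *\<^sub>R b \<in> N" if "\<bar>s\<bar> < e" for s
      using e that \<open>b \<in> Basis\<close> by (auto simp: dist_norm intro!: subsetD[OF e])
    show "((\<lambda>s. W (p + s *\<^sub>R b)) has_real_derivative g (p + s *\<^sub>R b) \<bullet> b) (at s)"
      if "\<bar>s\<bar> < e" for s
      using has_real_derivative_along_line[OF W[OF line[OF that]]] .
    have "((\<lambda>x. g x \<bullet> b) has_derivative (\<lambda>h. g' h \<bullet> b)) (at (p + 0 *\<^sub>R b))"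
      using g by (auto intro!: derivative_eq_intros)
    then show "((\<lambda>s. g (p + s *\<^sub>R b) \<bullet> b) has_real_derivative g' b \<bullet> b) (at 0)"
      by (rule has_real_derivative_along_line)
    show "W (p + s *\<^sub>R b) \<le> W (p + 0 *\<^sub>R b)" if "\<bar>s\<bar> < e" for s
      using max[OF line[OF that]] by simp
  qed
  then show "(\<Sum>b\<in>Basis. g' b \<bullet> b) \<le> 0"
    by (rule sum_nonpos)
qed

lemma shrink_radius_pos: "2 \<le> n \<Longrightarrow> 0 < shrink_radius n"
  unfolding shrink_radius_def by simp

lemma snd_cyl_proj [simp]: "snd (cyl_proj q) = snd q"
  by (simp add: cyl_proj_def)

lemma cyl_proj_in_Sigma_cyl: "fst q \<noteq> 0 \<Longrightarrow> cyl_proj q \<in> Sigma_cyl"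
  by (auto simp: cyl_proj_def Sigma_cyl_def shrink_radius_def)

lemma cyl_proj_on_Sigma_cyl: "p \<in> Sigma_cyl \<Longrightarrow> cyl_proj p = p"
  by (cases "fst p = 0") (auto simp: cyl_proj_def Sigma_cyl_def)

lemma cyl_ext_on_Sigma_cyl: "p \<in> Sigma_cyl \<Longrightarrow> cyl_ext u p = u p"
  by (simp add: cyl_ext_def cyl_proj_on_Sigma_cyl)

lemma fst_neq_0_on_Sigma_cyl:
  "CARD('n) \<ge> 2 \<Longrightarrow> p \<in> (Sigma_cyl :: ((real^'n) \<times> real) set) \<Longrightarrow> fst p \<noteq> 0"
  using shrink_radius_pos[of "CARD('n)"] by (auto simp: Sigma_cyl_def)

lemma has_derivative_norm_fst:
  fixes q :: "'a::real_inner \<times> 'b::real_normed_vector"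
  assumes "fst q \<noteq> 0"
  shows "((\<lambda>q. norm (fst q)) has_derivative (\<lambda>h. sgn (fst q) \<bullet> fst h)) (at q)"
  using has_derivative_compose[OF has_derivative_fst[OF has_derivative_ident]
      has_derivative_norm[OF assms]]
  by (simp add: o_def inner_commute)

lemma has_derivative_cyl_sdist:
  fixes x :: "(real^'n) \<times> real"
  assumes "fst x \<noteq> 0"
  shows "(cyl_sdist has_derivative (\<lambda>h. (inverse (norm (fst x)) *\<^sub>R fst x, 0::real) \<bullet> h)) (at x)"
proof -
  have "((\<lambda>q. norm (fst q) - shrink_radius CARD('n)) has_derivative
      (\<lambda>h. sgn (fst x) \<bullet> fst h - 0)) (at x)"
    using assms by (intro derivative_intros has_derivative_norm_fst)
  moreover have "cyl_sdist = (\<lambda>q :: (real^'n) \<times> real. norm (fst q) - shrink_radius CARD('n))"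
    by (simp add: cyl_sdist_def fun_eq_iff)
  ultimately show ?thesis
    by (auto elim!: has_derivative_eq_rhs simp: fun_eq_iff sgn_div_norm inner_commute)
qed

lemma has_derivative_cyl_normal:
  fixes q :: "'a::real_inner \<times> real"
  assumes "fst q \<noteq> 0"
  shows "((\<lambda>q. (inverse (norm (fst q)) *\<^sub>R fst q, 0::real)) has_derivative
     (\<lambda>h. (inverse (norm (fst q)) *\<^sub>R fst h - ((fst q \<bullet> fst h) / norm (fst q)^3) *\<^sub>R fst q, 0)))
     (at q)"
proof -
  have "((\<lambda>q. inverse (norm (fst q))) has_derivative
     (\<lambda>h. - (inverse (norm (fst q)) * (sgn (fst q) \<bullet> fst h) * inverse (norm (fst q))))) (at q)"
    using assms by (intro Deriv.has_derivative_inverse has_derivative_norm_fst) auto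
  from has_derivative_Pair[OF has_derivative_scaleR[OF this has_derivative_fst[OF has_derivative_ident]]
      has_derivative_const[of 0]]
  show ?thesis
    by (rule has_derivative_eq_rhs)
       (use assms in \<open>auto simp: fun_eq_iff sgn_div_norm field_simps power3_eq_cube\<close>)
qed

lemma sum_Basis_norm_hessian_sq:
  fixes y :: "'a::euclidean_space"
  assumes "y \<noteq> 0"
  shows "(\<Sum>i\<in>Basis. (inverse (norm y) *\<^sub>R i - ((y \<bullet> i) / norm y ^ 3) *\<^sub>R y) \<bullet>
                      (inverse (norm y) *\<^sub>R i - ((y \<bullet> i) / norm y ^ 3) *\<^sub>R y))
    = (real DIM('a) - 1) / (norm y)\<^sup>2"
proof -
  have yy: "y \<bullet> y = (norm y)\<^sup>2"
    by (simp add: power2_norm_eq_inner)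
  have "(inverse (norm y) *\<^sub>R i - ((y \<bullet> i) / norm y ^ 3) *\<^sub>R y) \<bullet>
        (inverse (norm y) *\<^sub>R i - ((y \<bullet> i) / norm y ^ 3) *\<^sub>R y)
      = 1 / (norm y)\<^sup>2 - (y \<bullet> i)\<^sup>2 / (norm y)^4" if "i \<in> Basis" for i
    using assms that yy
    by (simp add: inner_diff_left inner_diff_right inner_commute[of i y]
        field_simps power2_eq_square power3_eq_cube power4_eq_xxxx)
  then have "?thesis \<longleftrightarrow>
      (\<Sum>i\<in>Basis. 1 / (norm y)\<^sup>2 - (y \<bullet> i)\<^sup>2 / (norm y)^4) = (real DIM('a) - 1) / (norm y)\<^sup>2"
    by (simp cong: sum.cong)
  also have "\<dots> \<longleftrightarrow> real DIM('a) / (norm y)\<^sup>2 - (y \<bullet> y) / (norm y)^4 = (real DIM('a) - 1) / (norm y)\<^sup>2"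
    by (simp add: sum_subtractf sum_divide_distrib[symmetric] euclidean_inner[of y y] power2_eq_square)
  finally show ?thesis
    using assms yy by (simp add: field_simps power4_eq_xxxx power2_eq_square)
qed

lemma cyl_A2_on_Sigma_cyl:
  fixes p :: "(real^'n) \<times> real"
  assumes "CARD('n) \<ge> 2" and "p \<in> Sigma_cyl"
  shows "cyl_A2 p = 1/2"
proof -
  define y where "y = fst p"
  have "y \<noteq> 0"
    using fst_neq_0_on_Sigma_cyl[OF assms] by (simp add: y_def)
  have r: "(norm y)\<^sup>2 = 2 * (real CARD('n) - 1)"
    using assms by (auto simp: Sigma_cyl_def y_def shrink_radius_def)
  define \<nu>' where "\<nu>' = (\<lambda>h :: (real^'n) \<times> real.
     (inverse (norm y) *\<^sub>R fst h - ((y \<bullet> fst h) / norm y ^ 3) *\<^sub>R y, 0::real))"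
  have "open {x :: (real^'n) \<times> real. fst x \<noteq> 0}"
    by (rule open_Collect_neq) (auto intro: continuous_intros)
  then have "pd c (pd b cyl_sdist) p = \<nu>' c \<bullet> b" for b c
    by (rule pd_pd_eq_second_derivative)
       (use \<open>y \<noteq> 0\<close> in \<open>auto simp: y_def \<nu>'_def intro: has_derivative_cyl_sdist has_derivative_cyl_normal\<close>)
  then have "cyl_A2 p = (\<Sum>b\<in>Basis. \<Sum>c\<in>Basis. (\<nu>' c \<bullet> b)\<^sup>2)"
    by (simp add: cyl_A2_def)
  also have "\<dots> = (\<Sum>i\<in>Basis. \<nu>' (i, 0) \<bullet> \<nu>' (i, 0)) + (\<Sum>i\<in>Basis. \<nu>' (0, i) \<bullet> \<nu>' (0, i))"
    unfolding sum_Basis_inner_square by (rule sum_Basis_prod_real)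
  also have "\<dots> = (real CARD('n) - 1) / (norm y)\<^sup>2"
    using sum_Basis_norm_hessian_sq[OF \<open>y \<noteq> 0\<close>] by (simp add: \<nu>'_def)
  also have "\<dots> = 1/2"
    using r assms(1) by simp
  finally show ?thesis .
qed

lemma cyl_ext_height_fun: "cyl_ext (\<lambda>q. f (snd q)) = (\<lambda>q. f (snd q))"
  by (simp add: fun_eq_iff cyl_ext_def)

lemma has_derivative_height_fun:
  fixes q :: "'a::real_inner \<times> real"
  assumes "(f has_real_derivative f' (snd q)) (at (snd q))"
  shows "((\<lambda>q. f (snd q)) has_derivative (\<lambda>h. (0::'a, f' (snd q)) \<bullet> h)) (at q)"
proof -
  have "((\<lambda>q. f (snd q)) has_derivative (\<lambda>h. f' (snd q) * snd h)) (at q)"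
    using has_derivative_compose[OF bounded_linear_imp_has_derivative[OF bounded_linear_snd]
        assms[unfolded has_field_derivative_def]]
    by (simp add: o_def)
  then show ?thesis
    by (rule has_derivative_eq_rhs) (auto simp: fun_eq_iff inner_Pair_0)
qed

lemma has_derivative_height_gradient:
  fixes q :: "'a::real_normed_vector \<times> real"
  assumes "(f' has_real_derivative f'' (snd q)) (at (snd q))"
  shows "((\<lambda>q. (0::'a, f' (snd q))) has_derivative (\<lambda>h. (0::'a, f'' (snd q) * snd h))) (at q)"
proof -
  have "((\<lambda>q. f' (snd q)) has_derivative (\<lambda>h. f'' (snd q) * snd h)) (at q)"
    using has_derivative_compose[OF bounded_linear_imp_has_derivative[OF bounded_linear_snd]
        assms[unfolded has_field_derivative_def]]
    by (simp add: o_def)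
  then show ?thesis
    by (intro derivative_intros)
qed

lemma C2_on_height_fun:
  fixes U :: "('a::euclidean_space \<times> real) set"
  assumes "open U"
    and "\<And>t. (f has_real_derivative f' t) (at t)" "\<And>t. (f' has_real_derivative f'' t) (at t)"
    and "continuous_on UNIV f''"
  shows "C2_on U (\<lambda>q. f (snd q))"
  unfolding C2_on_def
proof (intro conjI exI ballI allI)
  fix x :: "'a \<times> real" and h :: "'a \<times> real"
  show "((\<lambda>q. f (snd q)) has_derivative (\<lambda>h. (0, f' (snd x)) \<bullet> h)) (at x)"
    using assms(2) by (rule has_derivative_height_fun)
  show "((\<lambda>q. (0::'a, f' (snd q))) has_derivative (\<lambda>h. (0, f'' (snd x) * snd h))) (at x)"
    using assms(3) by (rule has_derivative_height_gradient)
  show "continuous_on U (\<lambda>x. (0::'a, f'' (snd x) * snd h))"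
    using continuous_on_compose2[OF assms(4) continuous_on_snd]
    by (auto intro!: continuous_intros elim: continuous_on_subset)
qed (fact \<open>open U\<close>)

lemma stab_op_height_fun:
  fixes p :: "(real^'n) \<times> real"
  assumes "CARD('n) \<ge> 2" "p \<in> Sigma_cyl"
    and "\<And>t. (f has_real_derivative f' t) (at t)" "\<And>t. (f' has_real_derivative f'' t) (at t)"
  shows "stab_op (\<lambda>q. f (snd q)) p = f'' (snd p) - snd p * f' (snd p) / 2 + f (snd p)"
proof -
  have "stab_op (\<lambda>q. f (snd q)) p = (\<Sum>b\<in>Basis. (0::real^'n, f'' (snd p) * snd b) \<bullet> b)
      - 1/2 * (p \<bullet> (0, f' (snd p))) + (cyl_A2 p + 1/2) * f (snd p)"
    by (rule stab_op_eq[of UNIV])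
       (auto simp: cyl_ext_height_fun intro: has_derivative_height_fun has_derivative_height_gradient assms(3,4))
  also have "(\<Sum>b\<in>Basis. (0::real^'n, f'' (snd p) * snd b) \<bullet> b) = f'' (snd p)"
    by (subst sum_Basis_prod_real) simp
  finally show ?thesis
    using cyl_A2_on_Sigma_cyl[OF assms(1,2)] by (cases p) (simp add: inner_Pair_0)
qed

lemma stable_region_if_positive_height_solution:
  fixes T :: "real set"
  assumes "CARD('n) \<ge> 2" "open T"
    and f': "\<And>t. (f has_real_derivative f' t) (at t)" and f'': "\<And>t. (f' has_real_derivative f'' t) (at t)"
    and "continuous_on UNIV f''"
    and "\<And>t. t \<in> T \<Longrightarrow> f'' t - t * f' t / 2 + f t = 0" "\<And>t. t \<in> T \<Longrightarrow> 0 < f t"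
  shows "stable_region {p \<in> (Sigma_cyl :: ((real^'n) \<times> real) set). snd p \<in> T}"
  unfolding stable_region_def
proof (intro exI conjI ballI)
  have band: "{q. fst q \<noteq> 0 \<and> cyl_proj q \<in> {p \<in> Sigma_cyl. snd p \<in> T}} = (-{0::real^'n}) \<times> T"
    by (auto simp: cyl_proj_in_Sigma_cyl)
  show "C2_on {q. fst q \<noteq> 0 \<and> cyl_proj q \<in> {p \<in> (Sigma_cyl :: ((real^'n) \<times> real) set). snd p \<in> T}}
      (cyl_ext (\<lambda>q. f (snd q)))"
  proof -
    have "C2_on ((-{0::real^'n}) \<times> T) (\<lambda>q. f (snd q))"
      by (intro C2_on_height_fun[OF _ f' f'' assms(5)] open_Times open_Compl closed_singleton assms(2))
    then show ?thesis
      by (simp only: band cyl_ext_height_fun)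
  qed
  fix p assume "p \<in> {p \<in> (Sigma_cyl :: ((real^'n) \<times> real) set). snd p \<in> T}"
  then show "stab_op (\<lambda>q. f (snd q)) p = 0" "0 < f (snd p)"
    using stab_op_height_fun[OF assms(1) _ f' f''] assms(6,7) by auto
qed

text \<open>Comparison at a touching point: if v lies below m u near p with equality at p,
  then W = v - m u has a local maximum at p, and the first and second order conditions
  cancel everything in L v - m L u except the Laplacian of W.\<close>
lemma stab_op_le_if_touching_from_below:
  fixes u v :: "(real^'n) \<times> real \<Rightarrow> real"
  assumes "C2_on N (cyl_ext v)" "C2_on N (cyl_ext u)" "p \<in> N" "p \<in> Sigma_cyl"
    and below: "\<And>q. q \<in> N \<Longrightarrow> cyl_ext v q \<le> m * cyl_ext u q"
    and touch: "v p = m * u p"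
  shows "stab_op v p \<le> m * stab_op u p"
proof -
  obtain gv Hv where "open N"
    and v: "\<And>x. x \<in> N \<Longrightarrow> (cyl_ext v has_derivative (\<lambda>h. gv x \<bullet> h)) (at x)"
    and gv: "\<And>x. x \<in> N \<Longrightarrow> (gv has_derivative Hv x) (at x)"
    using assms(1) unfolding C2_on_def by blast
  obtain gu Hu
    where u: "\<And>x. x \<in> N \<Longrightarrow> (cyl_ext u has_derivative (\<lambda>h. gu x \<bullet> h)) (at x)"
    and gu: "\<And>x. x \<in> N \<Longrightarrow> (gu has_derivative Hu x) (at x)"
    using assms(2) unfolding C2_on_def by blast
  define W where "W = (\<lambda>q. cyl_ext v q - m * cyl_ext u q)"
  have W: "(W has_derivative (\<lambda>h. (gv x - m *\<^sub>R gu x) \<bullet> h)) (at x)" if "x \<in> N" for x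
    unfolding W_def inner_diff_left inner_scaleR_left
    using that by (intro derivative_intros v u)
  have gW: "((\<lambda>x. gv x - m *\<^sub>R gu x) has_derivative (\<lambda>h. Hv p h - m *\<^sub>R Hu p h)) (at p)"
    using assms(3) by (intro derivative_intros gv gu)
  have "W q \<le> W p" if "q \<in> N" for q
    using below[OF that] touch cyl_ext_on_Sigma_cyl[OF assms(4)] by (simp add: W_def)
  note max = local_max_imp_gradient_zero_trace_nonpos[OF \<open>open N\<close> assms(3) W gW this]
  have sv: "stab_op v p = (\<Sum>b\<in>Basis. Hv p b \<bullet> b) - 1/2 * (p \<bullet> gv p) + (cyl_A2 p + 1/2) * v p"
    using \<open>open N\<close> assms(3) v gv[OF assms(3)] by (rule stab_op_eq)
  have su: "stab_op u p = (\<Sum>b\<in>Basis. Hu p b \<bullet> b) - 1/2 * (p \<bullet> gu p) + (cyl_A2 p + 1/2) * u p"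
    using \<open>open N\<close> assms(3) u gu[OF assms(3)] by (rule stab_op_eq)
  have "stab_op v p - m * stab_op u p = (\<Sum>b\<in>Basis. (Hv p b - m *\<^sub>R Hu p b) \<bullet> b)
      - 1/2 * (p \<bullet> (gv p - m *\<^sub>R gu p)) + (cyl_A2 p + 1/2) * (v p - m * u p)"
    unfolding sv su by (simp add: inner_diff_left inner_diff_right sum_subtractf sum_distrib_left algebra_simps)
  also have "\<dots> \<le> 0"
    using max touch by simp
  finally show ?thesis
    by simp
qed

lemma ratio_attains_positive_max_in_slab:
  fixes S :: "'a::topological_space set" and u :: "'a \<times> real \<Rightarrow> real"
  assumes "compact S" "S \<noteq> {}"
    and u: "continuous_on (S \<times> {\<alpha>..\<beta>}) u" "\<And>p. p \<in> S \<times> {\<alpha>..\<beta>} \<Longrightarrow> 0 < u p"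
    and f: "continuous_on {\<alpha>..\<beta>} f" "f \<alpha> \<le> 0" "f \<beta> \<le> 0" "t\<^sub>1 \<in> {\<alpha>..\<beta>}" "0 < f t\<^sub>1"
  obtains p\<^sub>0 m where "p\<^sub>0 \<in> S \<times> {\<alpha><..<\<beta>}" "0 < m" "f (snd p\<^sub>0) = m * u p\<^sub>0"
    "\<And>p. p \<in> S \<times> {\<alpha>..\<beta>} \<Longrightarrow> f (snd p) \<le> m * u p"
proof -
  let ?K = "S \<times> {\<alpha>..\<beta>}"
  have "continuous_on ?K (\<lambda>p. f (snd p) / u p)"
    using u by (intro continuous_intros continuous_on_compose2[OF f(1)]) force+
  moreover obtain y where "y \<in> S"
    using \<open>S \<noteq> {}\<close> by blast
  moreover have "compact ?K"
    using \<open>compact S\<close> by (simp add: compact_Times)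
  ultimately obtain p\<^sub>0 where "p\<^sub>0 \<in> ?K" and max: "\<And>p. p \<in> ?K \<Longrightarrow> f (snd p) / u p \<le> f (snd p\<^sub>0) / u p\<^sub>0"
    using continuous_attains_sup[of ?K "\<lambda>p. f (snd p) / u p"] f(4) by blast
  define m where "m = f (snd p\<^sub>0) / u p\<^sub>0"
  have "0 < f t\<^sub>1 / u (y, t\<^sub>1)"
    using f(4,5) u(2) \<open>y \<in> S\<close> by simp
  then have "0 < m"
    using max[of "(y, t\<^sub>1)"] f(4) \<open>y \<in> S\<close> by (simp add: m_def)
  have touch: "f (snd p\<^sub>0) = m * u p\<^sub>0"
    using u(2)[OF \<open>p\<^sub>0 \<in> ?K\<close>] by (simp add: m_def)
  then have "snd p\<^sub>0 \<noteq> \<alpha>" "snd p\<^sub>0 \<noteq> \<beta>"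
    using f(2,3) \<open>0 < m\<close> u(2)[OF \<open>p\<^sub>0 \<in> ?K\<close>] by (metis mult_pos_pos not_le)+
  with \<open>p\<^sub>0 \<in> ?K\<close> have "p\<^sub>0 \<in> S \<times> {\<alpha><..<\<beta>}"
    by (auto simp: mem_Times_iff)
  moreover have "f (snd p) \<le> m * u p" if "p \<in> ?K" for p
    using max[OF that] u(2)[OF that] by (simp add: m_def divide_le_eq mult.commute)
  ultimately show ?thesis
    using that \<open>0 < m\<close> touch by blast
qed

lemma stable_region_solution_near_band:
  fixes \<Omega> :: "((real^'n) \<times> real) set"
  assumes "CARD('n) \<ge> 2" "stable_region \<Omega>"
    and band: "\<And>p. p \<in> Sigma_cyl \<Longrightarrow> snd p \<in> {\<alpha>..\<beta>} \<Longrightarrow> p \<in> \<Omega>"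
  obtains u where "C2_on ((-{0::real^'n}) \<times> {\<alpha><..<\<beta>}) (cyl_ext u)"
    "continuous_on (sphere 0 (shrink_radius CARD('n)) \<times> {\<alpha>..\<beta>}) u"
    "\<And>p. p \<in> Sigma_cyl \<Longrightarrow> snd p \<in> {\<alpha>..\<beta>} \<Longrightarrow> stab_op u p = 0 \<and> 0 < u p"
proof -
  define S where "S = {q :: (real^'n) \<times> real. fst q \<noteq> 0 \<and> cyl_proj q \<in> \<Omega>}"
  obtain u where C2: "C2_on S (cyl_ext u)" and sol: "\<And>p. p \<in> \<Omega> \<Longrightarrow> stab_op u p = 0 \<and> 0 < u p"
    using assms(2) unfolding stable_region_def S_def by blast
  define K where "K = sphere (0::real^'n) (shrink_radius CARD('n)) \<times> {\<alpha>..\<beta>}"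
  have "K \<subseteq> S"
    using band fst_neq_0_on_Sigma_cyl[OF assms(1)]
    by (auto simp: K_def S_def Sigma_cyl_def cyl_proj_on_Sigma_cyl)
  then have "continuous_on K (cyl_ext u)"
    using C2 unfolding C2_on_def by (meson continuous_at_imp_continuous_on has_derivative_continuous subsetD)
  then have cont: "continuous_on K u"
    by (rule continuous_on_cong[THEN iffD1, rotated 2])
       (auto simp: K_def Sigma_cyl_def cyl_ext_on_Sigma_cyl)
  have "C2_on ((-{0}) \<times> {\<alpha><..<\<beta>}) (cyl_ext u)"
  proof (rule C2_on_subset[OF C2], intro open_Times open_Compl closed_singleton open_greaterThanLessThan)
    show "(-{0}) \<times> {\<alpha><..<\<beta>} \<subseteq> S"
    proof
      fix q :: "(real^'n) \<times> real"
      assume "q \<in> (-{0}) \<times> {\<alpha><..<\<beta>}"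
      then show "q \<in> S"
        using band[OF cyl_proj_in_Sigma_cyl[of q]] by (auto simp: S_def mem_Times_iff)
    qed
  qed
  from that[OF this cont[unfolded K_def]] show ?thesis
    using sol band by blast
qed

text \<open>Maximum principle: compare u with f at a point where f / u is maximal on the band.\<close>
lemma not_stable_region_if_band_subsolution:
  fixes \<Omega> :: "((real^'n) \<times> real) set"
  assumes "CARD('n) \<ge> 2"
    and band: "\<And>p. p \<in> Sigma_cyl \<Longrightarrow> snd p \<in> {\<alpha>..\<beta>} \<Longrightarrow> p \<in> \<Omega>"
    and f': "\<And>t. (f has_real_derivative f' t) (at t)"
    and f'': "\<And>t. (f' has_real_derivative f'' t) (at t)" "continuous_on UNIV f''"
    and "f \<alpha> \<le> 0" "f \<beta> \<le> 0" "t\<^sub>1 \<in> {\<alpha>..\<beta>}" "0 < f t\<^sub>1"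
    and sub: "\<And>t. \<alpha> < t \<Longrightarrow> t < \<beta> \<Longrightarrow> 0 < f t \<Longrightarrow> 0 < f'' t - t * f' t / 2 + f t"
  shows "\<not> stable_region \<Omega>"
proof
  define K where "K = sphere (0::real^'n) (shrink_radius CARD('n)) \<times> {\<alpha>..\<beta>}"
  have K_iff: "p \<in> K \<longleftrightarrow> p \<in> Sigma_cyl \<and> snd p \<in> {\<alpha>..\<beta>}" for p
    by (cases p) (auto simp: K_def Sigma_cyl_def)
  define N where "N = (-{0::real^'n}) \<times> {\<alpha><..<\<beta>}"
  assume "stable_region \<Omega>"
  then obtain u where C2: "C2_on N (cyl_ext u)" and cont_u: "continuous_on K u"
    and sol: "\<And>p. p \<in> Sigma_cyl \<Longrightarrow> snd p \<in> {\<alpha>..\<beta>} \<Longrightarrow> stab_op u p = 0 \<and> 0 < u p"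
    using stable_region_solution_near_band[OF assms(1) _ band] unfolding N_def K_def by blast
  have cont_f: "continuous_on {\<alpha>..\<beta>} f"
    using f' by (intro continuous_at_imp_continuous_on) (auto intro: DERIV_isCont)
  obtain p\<^sub>0 m where "p\<^sub>0 \<in> sphere 0 (shrink_radius CARD('n)) \<times> {\<alpha><..<\<beta>}" "0 < m"
      and touch: "f (snd p\<^sub>0) = m * u p\<^sub>0" and below: "\<And>p. p \<in> K \<Longrightarrow> f (snd p) \<le> m * u p"
    unfolding K_def
    by (rule ratio_attains_positive_max_in_slab[OF compact_sphere _ cont_u[unfolded K_def] _ cont_f assms(6-9)])
       (use sol K_iff shrink_radius_pos[OF assms(1)] in \<open>auto simp: K_def\<close>)
  then have "p\<^sub>0 \<in> K" "p\<^sub>0 \<in> N" and t\<^sub>0: "\<alpha> < snd p\<^sub>0" "snd p\<^sub>0 < \<beta>"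
    using shrink_radius_pos[OF assms(1)] by (auto simp: K_def N_def mem_Times_iff)
  have "stab_op (\<lambda>q. f (snd q)) p\<^sub>0 \<le> m * stab_op u p\<^sub>0"
  proof (rule stab_op_le_if_touching_from_below[OF _ C2 \<open>p\<^sub>0 \<in> N\<close>])
    show "C2_on N (cyl_ext (\<lambda>q. f (snd q)))"
      unfolding cyl_ext_height_fun N_def
      by (intro C2_on_height_fun[OF _ f' f''] open_Times open_Compl closed_singleton open_greaterThanLessThan)
    show "cyl_ext (\<lambda>q. f (snd q)) q \<le> m * cyl_ext u q" if "q \<in> N" for q
    proof -
      have "fst q \<noteq> 0" "snd q \<in> {\<alpha>..\<beta>}"
        using that by (simp_all add: N_def mem_Times_iff)
      then have "cyl_proj q \<in> K"
        by (simp add: K_iff cyl_proj_in_Sigma_cyl)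
      then show ?thesis
        using below[of "cyl_proj q"] by (simp add: cyl_ext_def)
    qed
  qed (use touch \<open>p\<^sub>0 \<in> K\<close> K_iff in auto)
  also have "\<dots> = 0"
    using sol \<open>p\<^sub>0 \<in> K\<close> K_iff by simp
  finally have "stab_op (\<lambda>q. f (snd q)) p\<^sub>0 \<le> 0" .
  moreover have "0 < f (snd p\<^sub>0)"
    using touch \<open>0 < m\<close> sol \<open>p\<^sub>0 \<in> K\<close> K_iff by simp
  ultimately show False
    using stab_op_height_fun[OF assms(1) _ f' f''(1), of p\<^sub>0] sub[OF t\<^sub>0] \<open>p\<^sub>0 \<in> K\<close> K_iff by auto
qed

lemma sqrt_two_less_abs_iff: "sqrt 2 < \<bar>t\<bar> \<longleftrightarrow> 2 < t\<^sup>2"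
  by (metis real_sqrt_abs real_sqrt_less_iff)

lemma abs_less_sqrt_two_iff: "\<bar>t\<bar> < sqrt 2 \<longleftrightarrow> t\<^sup>2 < 2"
  by (metis real_sqrt_abs real_sqrt_less_iff)

text \<open>t^2 - 2 = H_2(t/2), with H_2 the second Hermite polynomial, is in the kernel of the height
  operator.\<close>
lemma stable_region_where_Hermite_multiple_pos:
  assumes "CARD('n) \<ge> 2" "open T" "\<And>t. t \<in> T \<Longrightarrow> 0 < c * (t\<^sup>2 - 2)"
  shows "stable_region {p \<in> (Sigma_cyl :: ((real^'n) \<times> real) set). snd p \<in> T}"
proof (rule stable_region_if_positive_height_solution[OF assms(1,2)])
  show "((\<lambda>t. c * (t\<^sup>2 - 2)) has_real_derivative 2 * c * t) (at t)"
    "((\<lambda>t. 2 * c * t) has_real_derivative 2 * c) (at t)" for t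
    by (auto intro!: derivative_eq_intros)
  show "2 * c - t * (2 * c * t) / 2 + c * (t\<^sup>2 - 2) = 0" for t
    by (simp add: power2_eq_square algebra_simps)
qed (use assms(3) in auto)

lemma stable_bands_sqrt_two:
  assumes "CARD('n) \<ge> 2"
  shows "stable_region {p \<in> (Sigma_cyl :: ((real^'n) \<times> real) set). snd p > sqrt 2}"
    "stable_region {p \<in> (Sigma_cyl :: ((real^'n) \<times> real) set). \<bar>snd p\<bar> < sqrt 2}"
    "stable_region {p \<in> (Sigma_cyl :: ((real^'n) \<times> real) set). snd p < - sqrt 2}"
proof -
  have outside: "0 < 1 * (t\<^sup>2 - 2)" if "sqrt 2 < t \<or> t < - sqrt 2" for t :: real
  proof -
    have "sqrt 2 < \<bar>t\<bar>"
      using that by linarith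
    then show ?thesis
      using sqrt_two_less_abs_iff[of t] by simp
  qed
  have inside: "0 < -1 * (t\<^sup>2 - 2)" if "t \<in> {t. \<bar>t\<bar> < sqrt 2}" for t :: real
    using that abs_less_sqrt_two_iff[of t] by simp
  have "open {t :: real. \<bar>t\<bar> < sqrt 2}"
    by (intro open_Collect_less continuous_intros)
  from stable_region_where_Hermite_multiple_pos[OF assms open_greaterThan outside]
    stable_region_where_Hermite_multiple_pos[OF assms this inside]
    stable_region_where_Hermite_multiple_pos[OF assms open_lessThan outside]
  show "stable_region {p \<in> (Sigma_cyl :: ((real^'n) \<times> real) set). snd p > sqrt 2}"
    "stable_region {p \<in> (Sigma_cyl :: ((real^'n) \<times> real) set). \<bar>snd p\<bar> < sqrt 2}"
    "stable_region {p \<in> (Sigma_cyl :: ((real^'n) \<times> real) set). snd p < - sqrt 2}"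
    by simp_all
qed

text \<open>For sqrt 2 < a < C, the function a^2 - t^2 is a strict subsolution on the band |t| \<le> a.\<close>
lemma middle_band_unstable:
  assumes "CARD('n) \<ge> 2" "sqrt 2 < C"
  shows "\<not> stable_region {p \<in> (Sigma_cyl :: ((real^'n) \<times> real) set). \<bar>snd p\<bar> < C}"
proof -
  define a where "a = (sqrt 2 + C) / 2"
  have "sqrt 2 < a" "a < C"
    using assms(2) by (simp_all add: a_def)
  moreover have "0 \<le> sqrt 2"
    by simp
  ultimately have "2 < a\<^sup>2" "0 < a"
    using sqrt_two_less_abs_iff[of a] by linarith+
  show ?thesis
  proof (rule not_stable_region_if_band_subsolution[OF assms(1), of "-a" a _ "\<lambda>t. a\<^sup>2 - t\<^sup>2"
        "\<lambda>t. - 2 * t" "\<lambda>_. - 2" 0])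
    show "((\<lambda>t. a\<^sup>2 - t\<^sup>2) has_real_derivative - 2 * t) (at t)"
      "((\<lambda>t. - 2 * t) has_real_derivative - 2) (at t)" for t
      by (auto intro!: derivative_eq_intros)
  qed (use \<open>a < C\<close> \<open>0 < a\<close> \<open>2 < a\<^sup>2\<close> in \<open>auto simp: power2_eq_square\<close>)
qed

lemma quartic_height_op_eq:
  fixes \<delta> t :: real
  shows "2 - 12 * \<delta> * t\<^sup>2 - t * (2 * t - 4 * \<delta> * t ^ 3) / 2 + (t\<^sup>2 - (2 - 100 * \<delta>) - \<delta> * (t\<^sup>2)\<^sup>2)
    = \<delta> * ((t\<^sup>2 - 6)\<^sup>2 + 64)"
  by (simp add: power2_eq_square power3_eq_cube field_simps)

text \<open>For C < sqrt 2 take the quartic perturbation f t = t^2 - b - \<delta> t^4 of t^2 - 2 with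
  b = 2 - 100 \<delta>: it is positive at sqrt (2 b) but not at sqrt b > C nor at sqrt (1 / \<delta>).\<close>
lemma upper_band_unstable:
  assumes "CARD('n) \<ge> 2" "0 < C" "C < sqrt 2"
  shows "\<not> stable_region {p \<in> (Sigma_cyl :: ((real^'n) \<times> real) set). snd p > C}"
proof -
  define b where "b = (C\<^sup>2 + 2) / 2"
  define \<delta> where "\<delta> = (2 - b) / 100"
  have "C\<^sup>2 < 2"
    using assms(2,3) abs_less_sqrt_two_iff[of C] by simp
  then have "C\<^sup>2 < b" "b < 2" "0 < b"
    by (simp_all add: b_def add_nonneg_pos)
  then have "0 < \<delta>" "\<delta> < 1/50"
    by (simp_all add: \<delta>_def)
  have "\<delta> * b < 1/50 * 2"
    using \<open>0 < \<delta>\<close> \<open>\<delta> < 1/50\<close> \<open>0 < b\<close> \<open>b < 2\<close> by (intro mult_strict_mono) auto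
  define f where "f t = t\<^sup>2 - b - \<delta> * (t\<^sup>2)\<^sup>2" for t
  have f_sqrt: "f (sqrt x) = x - b - \<delta> * x\<^sup>2" if "0 \<le> x" for x
    using that by (simp add: f_def)
  show ?thesis
  proof (rule not_stable_region_if_band_subsolution[OF assms(1), of "sqrt b" "sqrt (1 / \<delta>)" _ f
        "\<lambda>t. 2 * t - 4 * \<delta> * t ^ 3" "\<lambda>t. 2 - 12 * \<delta> * t\<^sup>2" "sqrt (2 * b)"])
    show "(f has_real_derivative 2 * t - 4 * \<delta> * t ^ 3) (at t)"
      "((\<lambda>t. 2 * t - 4 * \<delta> * t ^ 3) has_real_derivative 2 - 12 * \<delta> * t\<^sup>2) (at t)" for t
      unfolding f_def
      by (auto intro!: derivative_eq_intros simp: power2_eq_square power3_eq_cube algebra_simps)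
    show "continuous_on UNIV (\<lambda>t. 2 - 12 * \<delta> * t\<^sup>2)"
      by (intro continuous_intros)
    show "p \<in> {p \<in> Sigma_cyl. C < snd p}" if "p \<in> Sigma_cyl" "snd p \<in> {sqrt b..sqrt (1 / \<delta>)}" for p
      using that real_less_rsqrt[OF \<open>C\<^sup>2 < b\<close>] by simp
    show "f (sqrt b) \<le> 0"
      using \<open>0 < b\<close> \<open>0 < \<delta>\<close> by (simp add: f_sqrt)
    show "f (sqrt (1 / \<delta>)) \<le> 0"
      using \<open>0 < b\<close> \<open>0 < \<delta>\<close> by (simp add: f_sqrt power2_eq_square)
    have "2 * b < 1 / \<delta>"
      using \<open>\<delta> * b < 1/50 * 2\<close> \<open>0 < \<delta>\<close> by (simp add: field_simps)
    then show "sqrt (2 * b) \<in> {sqrt b..sqrt (1 / \<delta>)}"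
      using \<open>0 < b\<close> by simp
    show "0 < f (sqrt (2 * b))"
      using \<open>\<delta> * b < 1/50 * 2\<close> \<open>0 < b\<close> by (simp add: f_sqrt power2_eq_square field_simps)
    have "b = 2 - 100 * \<delta>"
      by (simp add: \<delta>_def field_simps)
    then show "0 < 2 - 12 * \<delta> * t\<^sup>2 - t * (2 * t - 4 * \<delta> * t ^ 3) / 2 + f t" for t
      using quartic_height_op_eq[of \<delta> t] \<open>0 < \<delta>\<close> by (simp add: f_def add_nonneg_pos)
  qed
qed

theorem corollary4p10:
  assumes "CARD('n) \<ge> 2"
  shows "\<forall>C>0.
    (stable_region {p \<in> (Sigma_cyl :: ((real^'n) \<times> real) set). snd p > C} \<and>
     stable_region {p \<in> (Sigma_cyl :: ((real^'n) \<times> real) set). \<bar>snd p\<bar> < C} \<and>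
     stable_region {p \<in> (Sigma_cyl :: ((real^'n) \<times> real) set). snd p < - C})
    \<longleftrightarrow> C = sqrt 2"
proof (intro allI impI iffI)
  fix C :: real
  assume "0 < C" and stable:
    "stable_region {p \<in> (Sigma_cyl :: ((real^'n) \<times> real) set). snd p > C} \<and>
     stable_region {p \<in> (Sigma_cyl :: ((real^'n) \<times> real) set). \<bar>snd p\<bar> < C} \<and>
     stable_region {p \<in> (Sigma_cyl :: ((real^'n) \<times> real) set). snd p < - C}"
  show "C = sqrt 2"
    using stable upper_band_unstable[OF assms \<open>0 < C\<close>] middle_band_unstable[OF assms]
    by (metis linorder_neqE_linordered_idom)
qed (use stable_bands_sqrt_two[OF assms] in simp)

end
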